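(* Let $\Omega\subset\mathbb{R}^3$ be a connected bounded open set with $C^2$ boundary and let $0<d<\min\{1,\delta\}$, where $\delta=\delta(\Omega)$ is as in the context. Then $\Omega\setminus\Omega_{d/8}$ is pathwise connected: for any $x'_1,x'_2\in\Omega\setminus\Omega_{d/8}$ there is a continuous curve in $\Omega\setminus\Omega_{d/8}$ joining $x'_1$ and $x'_2$.
   Context: $\Omega_\epsilon:=\{x\in\Omega:d(x,\partial\Omega)<\epsilon\}$. $\delta(\Omega)>0$ is a number such that for each $0<d<\min\{1,\delta\}$ there are $x_1^0,\dots,x_{m_1}^0\in\partial\Omega$ with $\partial\Omega\subset\bigcup_iB(x_i^0,d/8)$ and, for each $i$, an orthonormal basis $\{e_i^1,e_i^2,-n(x_i^0)\}$ ($n$ the outward unit normal) and a $C^2$ function $\phi_i:\mathbb{R}^2\to\mathbb{R}$, $\phi_i(0)=0$, $\nabla\phi_i(0)=0$, $|\nabla\phi_i|<\frac1{100}$, such that inside $B(x_i^0,3d)$ (open and closed) $\partial\Omega$ is the graph $\{x_i^0+u_1e_i^1+u_2e_i^2-\phi_i(u_1,u_2)n(x_i^0)\}$ and $\Omega$ is the region $u_3>\phi_i(u_1,u_2)$ in coordinates $x_i^0+u_1e_i^1+u_2e_i^2-u_3n(x_i^0)$, and $B(x_i^0-\frac d2n(x_i^0),\frac d2)\subset B(x_i^0,d)\cap\Omega$. *)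

theory Defs
  imports "HOL-Analysis.Analysis"
begin

definition C2_fun :: "('a::euclidean_space \<Rightarrow> real) \<Rightarrow> bool" where
  "C2_fun f \<longleftrightarrow> (\<exists>(f' :: 'a \<Rightarrow> 'a \<Rightarrow>\<^sub>L real) (f'' :: 'a \<Rightarrow> 'a \<Rightarrow>\<^sub>L ('a \<Rightarrow>\<^sub>L real)).
      (\<forall>x. (f has_derivative blinfun_apply (f' x)) (at x)) \<and>
      (\<forall>x. (f' has_derivative blinfun_apply (f'' x)) (at x)) \<and>
      continuous_on UNIV f'')"

definition chart :: "real^3 \<Rightarrow> real^3 \<Rightarrow> real^3 \<Rightarrow> real^3 \<Rightarrow> real \<Rightarrow> real \<Rightarrow> real \<Rightarrow> real^3" where
  "chart x0 e1 e2 \<nu> u1 u2 u3 = x0 + u1 *\<^sub>R e1 + u2 *\<^sub>R e2 - u3 *\<^sub>R \<nu>"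

definition graph_chart ::
  "(real^3) set \<Rightarrow> real^3 \<Rightarrow> (real^3) set \<Rightarrow> real^3 \<Rightarrow> real^3 \<Rightarrow> real^3 \<Rightarrow> (real \<times> real \<Rightarrow> real) \<Rightarrow> bool" where
  "graph_chart \<Omega> x0 S e1 e2 \<nu> \<phi> \<longleftrightarrow>
     norm e1 = 1 \<and> norm e2 = 1 \<and> norm \<nu> = 1 \<and>
     e1 \<bullet> e2 = 0 \<and> e1 \<bullet> \<nu> = 0 \<and> e2 \<bullet> \<nu> = 0 \<and>
     C2_fun \<phi> \<and> \<phi> (0, 0) = 0 \<and>
     frontier \<Omega> \<inter> S = {chart x0 e1 e2 \<nu> u1 u2 (\<phi> (u1, u2)) | u1 u2. True} \<inter> S \<and>
     \<Omega> \<inter> S = {chart x0 e1 e2 \<nu> u1 u2 u3 | u1 u2 u3. u3 > \<phi> (u1, u2)} \<inter> S"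

definition C2_boundary :: "(real^3) set \<Rightarrow> bool" where
  "C2_boundary \<Omega> \<longleftrightarrow> (\<forall>x\<in>frontier \<Omega>. \<exists>r>0. \<exists>e1 e2 \<nu> \<phi>. graph_chart \<Omega> x (ball x r) e1 e2 \<nu> \<phi>)"

text \<open>The number delta(\<Omega>) of the context. The vector nu plays the role of the outward unit
  normal n(x_i^0); it is forced to be it by the graph conditions together with grad phi(0) = 0.\<close>
definition delta_property :: "(real^3) set \<Rightarrow> real \<Rightarrow> bool" where
  "delta_property \<Omega> \<delta> \<longleftrightarrow> \<delta> > 0 \<and>
     (\<forall>d. 0 < d \<and> d < min 1 \<delta> \<longrightarrow>
        (\<exists>X. finite X \<and> X \<subseteq> frontier \<Omega> \<and> frontier \<Omega> \<subseteq> (\<Union>x\<in>X. ball x (d/8)) \<and>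
           (\<forall>x\<in>X. \<exists>e1 e2 \<nu> \<phi>.
               graph_chart \<Omega> x (ball x (3*d)) e1 e2 \<nu> \<phi> \<and>
               graph_chart \<Omega> x (cball x (3*d)) e1 e2 \<nu> \<phi> \<and>
               frechet_derivative \<phi> (at (0, 0)) = (\<lambda>_. 0) \<and>
               (\<forall>u. onorm (frechet_derivative \<phi> (at u)) < 1/100) \<and>
               ball (x - (d/2) *\<^sub>R \<nu>) (d/2) \<subseteq> ball x d \<inter> \<Omega>)))"

definition Omega_eps :: "(real^3) set \<Rightarrow> real \<Rightarrow> (real^3) set" where
  "Omega_eps \<Omega> \<epsilon> = {x\<in>\<Omega>. infdist x (frontier \<Omega>) < \<epsilon>}"

end

theory Submission
  imports Defs
begin

(* Write r = d/8. A point lies outside Omega_eps \<Omega> r exactly when the ball of radius r around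
  it lies in \<Omega>, so the set in question is the inner parallel set K of \<Omega>. As \<Omega> is connected,
  it suffices that near every a \<in> \<Omega> some point of K lies within 5r/2 of a and any two points of
  K within 5r of a are joined by a path in K. Far from the boundary straight segments do this.
  Near the boundary, a chart of the delta property exhibits \<Omega> as the set where the height
  u3 - \<phi>(u1,u2) is positive; this height grows at unit rate along the inward normal and, since
  \<phi> is 1/100-Lipschitz, it is concave up to an error of dist/200. So pushing two points of K
  inward by 2r, joining the pushed points by a segment and coming back stays inside K. *)

lemma lipschitz_on_of_onorm_frechet_derivative_le:
  fixes f :: "'a::real_normed_vector \<Rightarrow> 'b::real_normed_vector"
  assumes diff: "\<And>x. f differentiable (at x)"
    and bound: "\<And>x. onorm (frechet_derivative f (at x)) \<le> B"
  shows "B-lipschitz_on UNIV f"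
proof (rule lipschitz_onI)
  have deriv: "(f has_derivative frechet_derivative f (at x)) (at x within UNIV)" for x
    using diff[of x] by (simp add: frechet_derivative_works)
  show "dist (f x) (f y) \<le> B * dist x y" for x y
    using differentiable_bound[OF convex_UNIV deriv bound] by (simp add: dist_norm)
  show "0 \<le> B"
    using onorm_pos_le[OF has_derivative_bounded_linear[OF deriv]] bound order_trans by blast
qed

lemma C2_fun_differentiable: "C2_fun f \<Longrightarrow> f differentiable (at x)"
  unfolding C2_fun_def differentiable_def by blast

lemma lipschitz_on_convex_combination_le:
  fixes f :: "'a::real_normed_vector \<Rightarrow> real"
  assumes "L-lipschitz_on UNIV f" and "0 \<le> s" "s \<le> 1"
  shows "f ((1 - s) *\<^sub>R p + s *\<^sub>R q) \<le> (1 - s) * f p + s * f q + L / 2 * dist p q"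
proof -
  let ?m = "(1 - s) *\<^sub>R p + s *\<^sub>R q"
  have L: "0 \<le> L" using lipschitz_on_nonneg[OF assms(1)] .
  have "?m - p = s *\<^sub>R (q - p)" "?m - q = (1 - s) *\<^sub>R (p - q)"
    by (simp_all add: algebra_simps)
  then have "dist ?m p = s * dist p q" "dist ?m q = (1 - s) * dist p q"
    using assms(2,3) by (simp_all add: dist_norm norm_minus_commute)
  then have "f ?m \<le> f p + L * s * dist p q" "f ?m \<le> f q + L * (1 - s) * dist p q"
    using lipschitz_onD[OF assms(1), of ?m p] lipschitz_onD[OF assms(1), of ?m q]
    by (simp_all add: dist_real_def abs_le_iff mult.assoc)
  then have "(1 - s) * f ?m \<le> (1 - s) * (f p + L * s * dist p q)"
    and "s * f ?m \<le> s * (f q + L * (1 - s) * dist p q)"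
    using assms(2,3) by (simp_all add: mult_left_mono)
  then have "f ?m \<le> (1 - s) * f p + s * f q + L * (2 * s * (1 - s)) * dist p q"
    by (simp add: algebra_simps)
  moreover have "L * (2 * s * (1 - s)) * dist p q \<le> L / 2 * dist p q"
  proof -
    have "2 * s * (1 - s) \<le> 1 / 2" using zero_le_power2[of "2 * s - 1"]
      by (simp add: power2_eq_square algebra_simps)
    then have "L * (2 * s * (1 - s)) \<le> L / 2"
      using mult_left_mono[OF _ L] by fastforce
    then show ?thesis by (rule mult_right_mono) simp
  qed
  ultimately show ?thesis by linarith
qed

lemma path_connected_of_locally_linked:
  fixes S K :: "'a::metric_space set"
  assumes "connected S" "K \<subseteq> S" "0 < \<rho>"
    and seed: "\<And>a. a \<in> S \<Longrightarrow> \<exists>k\<in>K. dist a k < \<rho>"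
    and link: "\<And>a k k'. a \<in> S \<Longrightarrow> k \<in> K \<Longrightarrow> k' \<in> K \<Longrightarrow> dist a k < 2 * \<rho> \<Longrightarrow> dist a k' < 2 * \<rho>
      \<Longrightarrow> path_component K k k'"
  shows "path_connected K"
  unfolding path_connected_component
proof (intro ballI)
  fix x1 x2 assume x1: "x1 \<in> K" and x2: "x2 \<in> K"
  define P where "P x \<longleftrightarrow> (\<exists>k\<in>K. dist x k < 3/2 * \<rho> \<and> path_component K x1 k)" for x
  have "P x2"
  proof (rule connected_induction_simple[OF \<open>connected S\<close>])
    show "x1 \<in> S" "x2 \<in> S" using x1 x2 \<open>K \<subseteq> S\<close> by auto
    show "P x1" unfolding P_def using x1 \<open>0 < \<rho>\<close> path_component_refl[OF x1] by force
    fix a assume a: "a \<in> S"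
    obtain k0 where k0: "k0 \<in> K" "dist a k0 < \<rho>" using seed[OF a] by blast
    have "P y" if "x \<in> ball a (\<rho>/2)" "y \<in> ball a (\<rho>/2)" "P x" for x y
    proof -
      obtain k where k: "k \<in> K" "dist x k < 3/2 * \<rho>" "path_component K x1 k"
        using \<open>P x\<close> unfolding P_def by blast
      have "dist a k < 2 * \<rho>" using k(2) that(1) dist_triangle[of a k x] by simp
      then have "path_component K k k0" using link[OF a k(1) k0(1)] k0(2) \<open>0 < \<rho>\<close> by simp
      moreover have "dist y k0 < 3/2 * \<rho>" using that(2) k0(2) dist_triangle[of y k0 a]
        by (simp add: dist_commute)
      ultimately show "P y" unfolding P_def using k0(1) k(3) path_component_trans by blast
    qed
    moreover have "openin (top_of_set S) (S \<inter> ball a (\<rho>/2))" by (simp add: openin_open_Int)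
    moreover have "a \<in> S \<inter> ball a (\<rho>/2)" using a \<open>0 < \<rho>\<close> by simp
    ultimately show "\<exists>T. openin (top_of_set S) T \<and> a \<in> T \<and> (\<forall>x\<in>T. \<forall>y\<in>T. P x \<longrightarrow> P y)"
      by blast
  qed
  then obtain k where k: "k \<in> K" "dist x2 k < 3/2 * \<rho>" "path_component K x1 k"
    unfolding P_def by blast
  have "path_component K k x2" using link[of x2 k x2] k x2 \<open>K \<subseteq> S\<close> \<open>0 < \<rho>\<close> by auto
  then show "path_component K x1 x2" using k(3) path_component_trans by blast
qed

lemma frontier_point_near:
  fixes S :: "'a::real_normed_vector set"
  assumes "a \<in> S" "\<not> ball a \<rho> \<subseteq> S"
  obtains p where "p \<in> frontier S" "dist a p < \<rho>"
proof -
  obtain y where y: "y \<in> ball a \<rho> - S" using assms(2) by blast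
  then have "0 < \<rho>" using zero_le_dist[of a y] by (simp del: zero_le_dist)
  then have "a \<in> ball a \<rho> \<inter> S" using assms(1) by simp
  with y have "ball a \<rho> \<inter> frontier S \<noteq> {}"
    by (intro connected_Int_frontier connected_ball) blast+
  then show ?thesis using that by auto
qed

definition inner_parallel_set :: "'a::metric_space set \<Rightarrow> real \<Rightarrow> 'a set" where
  "inner_parallel_set S r = {x. ball x r \<subseteq> S}"

lemma inner_parallel_set_subset: "0 < r \<Longrightarrow> inner_parallel_set S r \<subseteq> S"
  unfolding inner_parallel_set_def by auto

lemma ball_subset_inner_parallel_set:
  assumes "ball a (R + r) \<subseteq> S"
  shows "ball a R \<subseteq> inner_parallel_set S r"
proof
  fix x assume "x \<in> ball a R"
  have "ball x r \<subseteq> ball a (R + r)"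
  proof
    fix y assume "y \<in> ball x r"
    then show "y \<in> ball a (R + r)"
      using \<open>x \<in> ball a R\<close> dist_triangle[of a y x] by simp
  qed
  then show "x \<in> inner_parallel_set S r" using assms unfolding inner_parallel_set_def by blast
qed

lemma Omega_eps_complement:
  fixes \<Omega> :: "(real^3) set"
  assumes "open \<Omega>" "bounded \<Omega>" "0 < r"
  shows "\<Omega> - Omega_eps \<Omega> r = inner_parallel_set \<Omega> r"
proof (cases "\<Omega> = {}")
  case True
  then show ?thesis using \<open>0 < r\<close> by (auto simp: inner_parallel_set_def Omega_eps_def)
next
  case False
  then have fr: "frontier \<Omega> \<noteq> {}"
    using \<open>bounded \<Omega>\<close> frontier_eq_empty not_bounded_UNIV by blast
  have "x \<in> \<Omega> \<and> r \<le> infdist x (frontier \<Omega>) \<longleftrightarrow> ball x r \<subseteq> \<Omega>" for x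
  proof
    assume x: "x \<in> \<Omega> \<and> r \<le> infdist x (frontier \<Omega>)"
    show "ball x r \<subseteq> \<Omega>"
    proof (rule ccontr)
      assume "\<not> ball x r \<subseteq> \<Omega>"
      then obtain p where "p \<in> frontier \<Omega>" "dist x p < r"
        using frontier_point_near[of x \<Omega> r] x by blast
      then show False using x infdist_le[of p "frontier \<Omega>" x] by linarith
    qed
  next
    assume b: "ball x r \<subseteq> \<Omega>"
    have "r \<le> dist x p" if "p \<in> frontier \<Omega>" for p
      using that b \<open>open \<Omega>\<close> by (auto simp: frontier_def interior_open subset_iff not_less)
    then have "r \<le> infdist x (frontier \<Omega>)"
      unfolding infdist_notempty[OF fr] by (intro cINF_greatest[OF fr])
    then show "x \<in> \<Omega> \<and> r \<le> infdist x (frontier \<Omega>)" using b \<open>0 < r\<close> by auto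
  qed
  then show ?thesis
    unfolding set_eq_iff inner_parallel_set_def Omega_eps_def by (simp add: not_less) blast
qed

definition orthonormal_triple :: "'a::real_inner \<Rightarrow> 'a \<Rightarrow> 'a \<Rightarrow> bool" where
  "orthonormal_triple e1 e2 e3 \<longleftrightarrow> norm e1 = 1 \<and> norm e2 = 1 \<and> norm e3 = 1 \<and>
     e1 \<bullet> e2 = 0 \<and> e1 \<bullet> e3 = 0 \<and> e2 \<bullet> e3 = 0"

lemma graph_chart_orthonormal_triple:
  "graph_chart \<Omega> x0 S e1 e2 \<nu> \<phi> \<Longrightarrow> orthonormal_triple e1 e2 \<nu>"
  unfolding graph_chart_def orthonormal_triple_def by blast

lemma orthonormal_triple_expansion:
  fixes v :: "'a::euclidean_space"
  assumes "DIM('a) = 3" and "orthonormal_triple e1 e2 e3"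
  shows "v = (v \<bullet> e1) *\<^sub>R e1 + (v \<bullet> e2) *\<^sub>R e2 + (v \<bullet> e3) *\<^sub>R e3"
proof -
  have unit: "e1 \<bullet> e1 = 1" "e2 \<bullet> e2 = 1" "e3 \<bullet> e3 = 1"
    and orth: "e1 \<bullet> e2 = 0" "e1 \<bullet> e3 = 0" "e2 \<bullet> e3 = 0"
    using assms(2) by (simp_all add: orthonormal_triple_def norm_eq_1)
  then have orth': "e2 \<bullet> e1 = 0" "e3 \<bullet> e1 = 0" "e3 \<bullet> e2 = 0" by (simp_all add: inner_commute)
  let ?B = "{e1, e2, e3}"
  have "pairwise orthogonal ?B"
    using orth orth' by (auto simp: pairwise_def orthogonal_def)
  moreover have "0 \<notin> ?B" using unit by auto
  ultimately have "independent ?B" by (rule pairwise_orthogonal_independent)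
  moreover have "card ?B = 3" using unit orth by (auto simp: card_insert_if)
  ultimately have span: "UNIV \<subseteq> span ?B"
    using assms(1) by (intro card_ge_dim_independent) simp_all
  define w where "w = v - ((v \<bullet> e1) *\<^sub>R e1 + (v \<bullet> e2) *\<^sub>R e2 + (v \<bullet> e3) *\<^sub>R e3)"
  have "w \<bullet> e1 = 0" "w \<bullet> e2 = 0" "w \<bullet> e3 = 0"
    using unit orth orth' by (simp_all add: w_def inner_diff_left inner_add_left)
  then have "orthogonal w w"
    by (intro orthogonal_to_span[of w ?B]) (use span in \<open>auto simp: orthogonal_def\<close>)
  then show ?thesis
    unfolding w_def orthogonal_def by (simp only: inner_eq_zero_iff right_minus_eq)
qed

lemma norm_orthonormal_coords_le:
  fixes v e1 e2 :: "'a::real_inner"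
  assumes "norm e1 = 1" "norm e2 = 1" "e1 \<bullet> e2 = 0"
  shows "norm (v \<bullet> e1, v \<bullet> e2) \<le> norm v"
proof -
  have unit: "e1 \<bullet> e1 = 1" "e2 \<bullet> e2 = 1" using assms(1,2) by (simp_all add: norm_eq_1)
  define w where "w = v - (v \<bullet> e1) *\<^sub>R e1 - (v \<bullet> e2) *\<^sub>R e2"
  have "w \<bullet> w = v \<bullet> v - (v \<bullet> e1)\<^sup>2 - (v \<bullet> e2)\<^sup>2"
    using unit assms(3)
    by (simp add: w_def inner_diff_left inner_diff_right inner_commute power2_eq_square
        algebra_simps)
  then have "(v \<bullet> e1)\<^sup>2 + (v \<bullet> e2)\<^sup>2 \<le> (norm v)\<^sup>2"
    using inner_ge_zero[of w] by (simp add: power2_norm_eq_inner)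
  then show ?thesis by (simp add: norm_Pair real_le_lsqrt)
qed

definition chart_height :: "'a::real_inner \<Rightarrow> 'a \<Rightarrow> 'a \<Rightarrow> 'a \<Rightarrow> (real \<times> real \<Rightarrow> real) \<Rightarrow> 'a \<Rightarrow> real"
  where "chart_height x0 e1 e2 \<nu> \<phi> z = - ((z - x0) \<bullet> \<nu>) - \<phi> ((z - x0) \<bullet> e1, (z - x0) \<bullet> e2)"

lemma chart_height_chart:
  assumes "orthonormal_triple e1 e2 \<nu>"
  shows "chart_height x0 e1 e2 \<nu> \<phi> (chart x0 e1 e2 \<nu> u1 u2 u3) = u3 - \<phi> (u1, u2)"
proof -
  have "e1 \<bullet> e1 = 1" "e2 \<bullet> e2 = 1" "\<nu> \<bullet> \<nu> = 1"
    "e1 \<bullet> e2 = 0" "e1 \<bullet> \<nu> = 0" "e2 \<bullet> \<nu> = 0" "e2 \<bullet> e1 = 0" "\<nu> \<bullet> e1 = 0" "\<nu> \<bullet> e2 = 0"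
    using assms by (simp_all add: orthonormal_triple_def norm_eq_1 inner_commute)
  then show ?thesis
    by (simp add: chart_height_def chart_def inner_diff_left inner_add_left)
qed

lemma graph_chart_mem_iff_chart_height_pos:
  assumes chart: "graph_chart \<Omega> x0 S e1 e2 \<nu> \<phi>" and "z \<in> S"
  shows "z \<in> \<Omega> \<longleftrightarrow> 0 < chart_height x0 e1 e2 \<nu> \<phi> z"
proof -
  have frame: "orthonormal_triple e1 e2 \<nu>" using chart by (rule graph_chart_orthonormal_triple)
  have above: "\<Omega> \<inter> S = {chart x0 e1 e2 \<nu> u1 u2 u3 | u1 u2 u3. u3 > \<phi> (u1, u2)} \<inter> S"
    using chart by (simp add: graph_chart_def)
  have "z - x0 = ((z - x0) \<bullet> e1) *\<^sub>R e1 + ((z - x0) \<bullet> e2) *\<^sub>R e2 + ((z - x0) \<bullet> \<nu>) *\<^sub>R \<nu>"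
    using frame by (intro orthonormal_triple_expansion) simp_all
  then have "z = chart x0 e1 e2 \<nu> ((z - x0) \<bullet> e1) ((z - x0) \<bullet> e2) (- ((z - x0) \<bullet> \<nu>))"
    unfolding chart_def by (simp add: algebra_simps)
  then have "z \<in> \<Omega> \<longleftrightarrow> (\<exists>u1 u2 u3. z = chart x0 e1 e2 \<nu> u1 u2 u3 \<and> u3 > \<phi> (u1, u2))"
    using above \<open>z \<in> S\<close> by blast
  also have "\<dots> \<longleftrightarrow> 0 < chart_height x0 e1 e2 \<nu> \<phi> z"
    using chart_height_chart[OF frame] \<open>z = chart _ _ _ _ _ _ _\<close> by (metis diff_gt_0_iff_gt)
  finally show ?thesis .
qed

lemma chart_height_diff_normal:
  assumes "orthonormal_triple e1 e2 \<nu>"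
  shows "chart_height x0 e1 e2 \<nu> \<phi> (z - t *\<^sub>R \<nu>) = chart_height x0 e1 e2 \<nu> \<phi> z + t"
proof -
  have "\<nu> \<bullet> \<nu> = 1" "\<nu> \<bullet> e1 = 0" "\<nu> \<bullet> e2 = 0"
    using assms by (simp_all add: orthonormal_triple_def norm_eq_1 inner_commute)
  then show ?thesis by (simp add: chart_height_def algebra_simps inner_diff_left)
qed

lemma dist_chart_coords_le:
  assumes "orthonormal_triple e1 e2 \<nu>"
  shows "dist ((a - x0) \<bullet> e1, (a - x0) \<bullet> e2) ((b - x0) \<bullet> e1, (b - x0) \<bullet> e2) \<le> dist a b"
proof -
  have "dist ((a - x0) \<bullet> e1, (a - x0) \<bullet> e2) ((b - x0) \<bullet> e1, (b - x0) \<bullet> e2)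
      = norm ((a - b) \<bullet> e1, (a - b) \<bullet> e2)"
    by (simp add: dist_norm inner_diff_left)
  also have "\<dots> \<le> dist a b"
    using assms unfolding orthonormal_triple_def dist_norm by (intro norm_orthonormal_coords_le) auto
  finally show ?thesis .
qed

lemma lipschitz_on_chart_height:
  assumes frame: "orthonormal_triple e1 e2 \<nu>" and lip: "L-lipschitz_on UNIV \<phi>"
  shows "(1 + L)-lipschitz_on UNIV (chart_height x0 e1 e2 \<nu> \<phi>)"
proof (rule lipschitz_onI)
  have L: "0 \<le> L" using lipschitz_on_nonneg[OF lip] .
  then show "0 \<le> 1 + L" by simp
  fix a b
  let ?c = "\<lambda>z. ((z - x0) \<bullet> e1, (z - x0) \<bullet> e2)"
  have "\<bar>(b - x0) \<bullet> \<nu> - (a - x0) \<bullet> \<nu>\<bar> \<le> dist a b"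
    using Cauchy_Schwarz_ineq2[of "b - a" \<nu>] frame
    by (simp add: orthonormal_triple_def inner_diff_left dist_norm norm_minus_commute)
  moreover have "\<bar>\<phi> (?c a) - \<phi> (?c b)\<bar> \<le> L * dist a b"
    using lipschitz_onD[OF lip, of "?c a" "?c b"] dist_chart_coords_le[OF frame, of a x0 b]
      mult_left_mono[OF _ L] unfolding dist_real_def by fastforce
  ultimately show "dist (chart_height x0 e1 e2 \<nu> \<phi> a) (chart_height x0 e1 e2 \<nu> \<phi> b)
      \<le> (1 + L) * dist a b"
    unfolding chart_height_def dist_real_def by (simp add: algebra_simps abs_le_iff)
qed

lemma chart_height_convex_combination_ge:
  assumes frame: "orthonormal_triple e1 e2 \<nu>" and lip: "L-lipschitz_on UNIV \<phi>"
    and "0 \<le> s" "s \<le> 1"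
  shows "(1 - s) * chart_height x0 e1 e2 \<nu> \<phi> a + s * chart_height x0 e1 e2 \<nu> \<phi> b - L / 2 * dist a b
    \<le> chart_height x0 e1 e2 \<nu> \<phi> ((1 - s) *\<^sub>R a + s *\<^sub>R b)"
proof -
  let ?c = "\<lambda>z. ((z - x0) \<bullet> e1, (z - x0) \<bullet> e2)"
  have comb: "(1 - s) *\<^sub>R a + s *\<^sub>R b - x0 = (1 - s) *\<^sub>R (a - x0) + s *\<^sub>R (b - x0)"
    by (simp add: algebra_simps)
  have coords: "?c ((1 - s) *\<^sub>R a + s *\<^sub>R b) = (1 - s) *\<^sub>R ?c a + s *\<^sub>R ?c b"
    unfolding comb by (simp add: inner_add_left)
  have "L / 2 * dist (?c a) (?c b) \<le> L / 2 * dist a b"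
    using dist_chart_coords_le[OF frame] lipschitz_on_nonneg[OF lip] by (intro mult_left_mono) auto
  then have "\<phi> (?c ((1 - s) *\<^sub>R a + s *\<^sub>R b)) \<le> (1 - s) * \<phi> (?c a) + s * \<phi> (?c b) + L / 2 * dist a b"
    using lipschitz_on_convex_combination_le[OF lip assms(3,4), of "?c a" "?c b"]
    unfolding coords by linarith
  then show ?thesis
    unfolding chart_height_def comb by (simp add: inner_add_left algebra_simps)
qed

(* The constants are those obtained from a chart over a 1/100-Lipschitz graph on a ball of
  radius 3d = 24r around x0, with n the inward normal (see boundary_height_chart_height). *)
locale boundary_height =
  fixes \<Omega> :: "'a::real_normed_vector set" and x0 n :: 'a and H :: "'a \<Rightarrow> real" and r :: real
  assumes r_pos: "0 < r"
    and norm_n: "norm n = 1"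
    and mem_iff_height_pos: "dist x0 z < 16 * r \<Longrightarrow> z \<in> \<Omega> \<longleftrightarrow> 0 < H z"
    and height_shift: "H (z + t *\<^sub>R n) = H z + t"
    and height_lipschitz: "(3/2)-lipschitz_on UNIV H"
    and height_almost_concave:
      "0 \<le> s \<Longrightarrow> s \<le> 1 \<Longrightarrow> (1 - s) * H a + s * H b - dist a b / 200 \<le> H ((1 - s) *\<^sub>R a + s *\<^sub>R b)"
begin

lemma mem_inner_parallel_set_if_height_ge:
  assumes "dist x0 z < 15 * r" and "3/2 * r \<le> H z"
  shows "z \<in> inner_parallel_set \<Omega> r"
  unfolding inner_parallel_set_def
proof (intro CollectI subsetI)
  fix w assume "w \<in> ball z r"
  then have "dist z w < r" by simp
  then have "dist x0 w < 16 * r" using assms(1) dist_triangle[of x0 w z] by linarith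
  moreover have "H z - H w \<le> 3/2 * dist z w"
    using lipschitz_onD[OF height_lipschitz UNIV_I UNIV_I, of z w] abs_ge_self[of "H z - H w"]
    unfolding dist_real_def by linarith
  then have "0 < H w" using assms(2) \<open>dist z w < r\<close> by linarith
  ultimately show "w \<in> \<Omega>" using mem_iff_height_pos by blast
qed

lemma height_pos: "z \<in> \<Omega> \<Longrightarrow> dist x0 z < 16 * r \<Longrightarrow> 0 < H z"
  using mem_iff_height_pos by blast

lemma dist_shift: "dist z (z + t *\<^sub>R n) = \<bar>t\<bar>"
  using norm_n by (simp add: dist_norm)

lemma lift_mem_inner_parallel_set:
  assumes "a \<in> \<Omega>" and "dist x0 a < 13 * r"
  shows "a + (2 * r) *\<^sub>R n \<in> inner_parallel_set \<Omega> r"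
proof (rule mem_inner_parallel_set_if_height_ge)
  show "dist x0 (a + (2 * r) *\<^sub>R n) < 15 * r"
    using assms(2) dist_triangle[of x0 "a + (2 * r) *\<^sub>R n" a] dist_shift[of a "2 * r"] r_pos by simp
  show "3/2 * r \<le> H (a + (2 * r) *\<^sub>R n)"
    using height_pos[OF assms(1)] assms(2) height_shift r_pos by simp
qed

lemma shift_mem_inner_parallel_set:
  assumes k: "k \<in> inner_parallel_set \<Omega> r" "dist x0 k < 12 * r" and t: "0 \<le> t" "t \<le> 2 * r"
  shows "k + t *\<^sub>R n \<in> inner_parallel_set \<Omega> r"
  unfolding inner_parallel_set_def
proof (intro CollectI subsetI)
  fix w assume "w \<in> ball (k + t *\<^sub>R n) r"
  then have w: "dist (k + t *\<^sub>R n) w < r" by simp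
  have "dist k (w - t *\<^sub>R n) = dist (k + t *\<^sub>R n) w" by (simp add: dist_norm algebra_simps)
  then have "w - t *\<^sub>R n \<in> \<Omega>" using k(1) w unfolding inner_parallel_set_def by auto
  moreover have "dist x0 (w - t *\<^sub>R n) < 16 * r"
    using k(2) w \<open>dist k (w - t *\<^sub>R n) = _\<close> dist_triangle[of x0 "w - t *\<^sub>R n" k] r_pos
    by linarith
  ultimately have "0 < H (w - t *\<^sub>R n)" by (rule height_pos)
  moreover have "H w = H (w - t *\<^sub>R n) + t" using height_shift[of "w - t *\<^sub>R n" t] by simp
  moreover have "dist x0 w < 16 * r"
    using k(2) t w dist_shift[of k t] dist_triangle[of x0 w k] dist_triangle[of k w "k + t *\<^sub>R n"]
    by linarith
  ultimately show "w \<in> \<Omega>" using mem_iff_height_pos t by simp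
qed

lemma path_component_lift:
  assumes "k \<in> inner_parallel_set \<Omega> r" "dist x0 k < 12 * r"
  shows "path_component (inner_parallel_set \<Omega> r) k (k + (2 * r) *\<^sub>R n)"
proof (rule path_component_linepath, rule subsetI)
  fix z assume "z \<in> closed_segment k (k + (2 * r) *\<^sub>R n)"
  then obtain u where u: "0 \<le> u" "u \<le> 1" "z = k + (u * (2 * r)) *\<^sub>R n"
    unfolding in_segment by (auto simp: algebra_simps)
  then show "z \<in> inner_parallel_set \<Omega> r"
    using shift_mem_inner_parallel_set[OF assms] r_pos mult_left_le_one_le[of "2 * r" u] by simp
qed

lemma path_component_lifted:
  assumes k: "k \<in> inner_parallel_set \<Omega> r" "dist x0 k < 12 * r"
    and k': "k' \<in> inner_parallel_set \<Omega> r" "dist x0 k' < 12 * r"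
    and "dist k k' < 10 * r"
  shows "path_component (inner_parallel_set \<Omega> r) (k + (2 * r) *\<^sub>R n) (k' + (2 * r) *\<^sub>R n)"
proof (rule path_component_linepath, rule subsetI)
  let ?A = "k + (2 * r) *\<^sub>R n" and ?B = "k' + (2 * r) *\<^sub>R n"
  fix z assume z: "z \<in> closed_segment ?A ?B"
  then obtain s where s: "0 \<le> s" "s \<le> 1" "z = (1 - s) *\<^sub>R ?A + s *\<^sub>R ?B"
    unfolding in_segment by auto
  have "k \<in> \<Omega>" "k' \<in> \<Omega>" using k(1) k'(1) inner_parallel_set_subset r_pos by blast+
  then have "2 * r < H ?A" "2 * r < H ?B"
    using height_pos[of k] height_pos[of k'] k(2) k'(2) r_pos height_shift by auto
  then have "(1 - s) * (2 * r) + s * (2 * r) \<le> (1 - s) * H ?A + s * H ?B"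
    using s by (intro add_mono mult_left_mono) auto
  moreover have "(1 - s) * (2 * r) + s * (2 * r) = 2 * r" by (simp add: algebra_simps)
  moreover have "dist ?A ?B = dist k k'" by (simp add: dist_norm)
  moreover have "(1 - s) * H ?A + s * H ?B - dist ?A ?B / 200 \<le> H z"
    using height_almost_concave[OF s(1,2), of ?A ?B] unfolding s(3) .
  ultimately have "3/2 * r \<le> H z"
    using \<open>dist k k' < 10 * r\<close> r_pos by linarith
  moreover have "dist x0 z < 15 * r"
  proof -
    have "dist x0 ?A < 15 * r" "dist x0 ?B < 15 * r"
      using k(2) k'(2) dist_shift[of k "2 * r"] dist_shift[of k' "2 * r"] r_pos
        dist_triangle[of x0 ?A k] dist_triangle[of x0 ?B k'] by simp_all
    then have "closed_segment ?A ?B \<subseteq> ball x0 (15 * r)"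
      by (intro closed_segment_subset) auto
    then show ?thesis using z by auto
  qed
  ultimately show "z \<in> inner_parallel_set \<Omega> r" by (intro mem_inner_parallel_set_if_height_ge)
qed

lemma linked_near_boundary:
  assumes "a \<in> \<Omega>" "dist x0 a < 7 * r"
  shows "\<exists>k\<in>inner_parallel_set \<Omega> r. dist a k < 5/2 * r"
    and "\<And>k k'. k \<in> inner_parallel_set \<Omega> r \<Longrightarrow> k' \<in> inner_parallel_set \<Omega> r \<Longrightarrow>
      dist a k < 5 * r \<Longrightarrow> dist a k' < 5 * r \<Longrightarrow> path_component (inner_parallel_set \<Omega> r) k k'"
proof -
  show "\<exists>k\<in>inner_parallel_set \<Omega> r. dist a k < 5/2 * r"
    using lift_mem_inner_parallel_set assms dist_shift[of a "2 * r"] r_pos by force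
next
  fix k k' assume k: "k \<in> inner_parallel_set \<Omega> r" "dist a k < 5 * r"
    and k': "k' \<in> inner_parallel_set \<Omega> r" "dist a k' < 5 * r"
  have "dist x0 k < 12 * r" "dist x0 k' < 12 * r"
    using assms(2) k(2) k'(2) dist_triangle[of x0 k a] dist_triangle[of x0 k' a] by simp_all
  moreover have "dist k k' < 10 * r"
    using k(2) k'(2) dist_triangle[of k k' a] by (simp add: dist_commute)
  ultimately show "path_component (inner_parallel_set \<Omega> r) k k'"
    using path_component_lift[OF k(1)] path_component_lift[OF k'(1)]
      path_component_lifted[OF k(1) _ k'(1)] path_component_sym path_component_trans by metis
qed

end

lemma boundary_height_chart_height:
  assumes chart: "graph_chart \<Omega> x0 (ball x0 R) e1 e2 \<nu> \<phi>" and lip: "(1/100)-lipschitz_on UNIV \<phi>"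
    and "0 < r" "16 * r \<le> R"
  shows "boundary_height \<Omega> x0 (- \<nu>) (chart_height x0 e1 e2 \<nu> \<phi>) r"
proof
  have frame: "orthonormal_triple e1 e2 \<nu>" using chart by (rule graph_chart_orthonormal_triple)
  show "0 < r" by fact
  show "norm (- \<nu>) = 1" using frame by (simp add: orthonormal_triple_def)
  show "z \<in> \<Omega> \<longleftrightarrow> 0 < chart_height x0 e1 e2 \<nu> \<phi> z" if "dist x0 z < 16 * r" for z
    using graph_chart_mem_iff_chart_height_pos[OF chart] that \<open>16 * r \<le> R\<close> by simp
  show "chart_height x0 e1 e2 \<nu> \<phi> (z + t *\<^sub>R - \<nu>) = chart_height x0 e1 e2 \<nu> \<phi> z + t" for z t
    using chart_height_diff_normal[OF frame] by simp
  show "(3/2)-lipschitz_on UNIV (chart_height x0 e1 e2 \<nu> \<phi>)"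
    using lipschitz_on_chart_height[OF frame lip] by (rule lipschitz_on_mono) auto
  show "(1 - s) * chart_height x0 e1 e2 \<nu> \<phi> a + s * chart_height x0 e1 e2 \<nu> \<phi> b - dist a b / 200
      \<le> chart_height x0 e1 e2 \<nu> \<phi> ((1 - s) *\<^sub>R a + s *\<^sub>R b)" if "0 \<le> s" "s \<le> 1" for s a b
    using chart_height_convex_combination_ge[OF frame lip that] by simp
qed

lemma delta_property_chart_near:
  assumes "delta_property \<Omega> \<delta>" "0 < d" "d < min 1 \<delta>" "p \<in> frontier \<Omega>"
  obtains x e1 e2 \<nu> \<phi> where "dist x p < d/8" "graph_chart \<Omega> x (ball x (3 * d)) e1 e2 \<nu> \<phi>"
    "(1/100)-lipschitz_on UNIV \<phi>"
proof -
  obtain X where cover: "frontier \<Omega> \<subseteq> (\<Union>x\<in>X. ball x (d/8))"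
    and charts: "\<forall>x\<in>X. \<exists>e1 e2 \<nu> \<phi>.
      graph_chart \<Omega> x (ball x (3 * d)) e1 e2 \<nu> \<phi> \<and>
      graph_chart \<Omega> x (cball x (3 * d)) e1 e2 \<nu> \<phi> \<and>
      frechet_derivative \<phi> (at (0, 0)) = (\<lambda>_. 0) \<and>
      (\<forall>u. onorm (frechet_derivative \<phi> (at u)) < 1/100) \<and>
      ball (x - (d/2) *\<^sub>R \<nu>) (d/2) \<subseteq> ball x d \<inter> \<Omega>"
    using assms(1-3) unfolding delta_property_def by (elim conjE allE[of _ d] impE) auto
  obtain x where "x \<in> X" "dist x p < d/8" using cover assms(4) by auto
  moreover obtain e1 e2 \<nu> \<phi> where chart: "graph_chart \<Omega> x (ball x (3 * d)) e1 e2 \<nu> \<phi>"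
    and "\<forall>u. onorm (frechet_derivative \<phi> (at u)) < 1/100"
    using charts \<open>x \<in> X\<close> by blast
  moreover have "C2_fun \<phi>" using chart by (simp add: graph_chart_def)
  ultimately show ?thesis
    using that lipschitz_on_of_onorm_frechet_derivative_le[of \<phi> "1/100"] C2_fun_differentiable
    by (meson less_imp_le)
qed

lemma inner_parallel_set_locally_linked:
  fixes \<Omega> :: "(real^3) set"
  assumes "delta_property \<Omega> \<delta>" "0 < d" "d < min 1 \<delta>" "a \<in> \<Omega>"
  defines "r \<equiv> d/8"
  defines "K \<equiv> inner_parallel_set \<Omega> r"
  shows "(\<exists>k\<in>K. dist a k < 5/2 * r) \<and>
    (\<forall>k\<in>K. \<forall>k'\<in>K. dist a k < 5 * r \<longrightarrow> dist a k' < 5 * r \<longrightarrow> path_component K k k')"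
proof (cases "ball a (6 * r) \<subseteq> \<Omega>")
  case True
  then have ball: "ball a (5 * r) \<subseteq> K"
    unfolding K_def by (intro ball_subset_inner_parallel_set) simp
  have "path_component K k k'" if "dist a k < 5 * r" "dist a k' < 5 * r" for k k'
  proof (rule path_component_linepath)
    have "closed_segment k k' \<subseteq> ball a (5 * r)"
      by (rule closed_segment_subset) (use that in auto)
    then show "closed_segment k k' \<subseteq> K" using ball by blast
  qed
  moreover have "a \<in> K" using ball \<open>0 < d\<close> unfolding r_def by auto
  ultimately show ?thesis using \<open>0 < d\<close> unfolding r_def by force
next
  case False
  with \<open>a \<in> \<Omega>\<close> obtain p where p: "p \<in> frontier \<Omega>" "dist a p < 6 * r"
    by (rule frontier_point_near)
  obtain x e1 e2 \<nu> \<phi> where x: "dist x p < r" and chart: "graph_chart \<Omega> x (ball x (3 * d)) e1 e2 \<nu> \<phi>"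
    and lip: "(1/100)-lipschitz_on UNIV \<phi>"
    using delta_property_chart_near[OF assms(1-3) p(1)] unfolding r_def by blast
  interpret boundary_height \<Omega> x "- \<nu>" "chart_height x e1 e2 \<nu> \<phi>" r
    using boundary_height_chart_height[OF chart lip] assms(2) unfolding r_def by simp
  have "dist x a < 7 * r" using x p(2) dist_triangle[of x a p] by (simp add: dist_commute)
  then show ?thesis
    using linked_near_boundary[OF assms(4)] unfolding K_def by blast
qed

theorem lemma2p5:
  fixes \<Omega> :: "(real^3) set" and \<delta> d :: real
  assumes "open \<Omega>" and "connected \<Omega>" and "bounded \<Omega>"
    and "C2_boundary \<Omega>"
    and "delta_property \<Omega> \<delta>"
    and "0 < d" and "d < min 1 \<delta>"
  shows "path_connected (\<Omega> - Omega_eps \<Omega> (d/8))"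
proof -
  have r: "0 < d/8" using \<open>0 < d\<close> by simp
  have "path_connected (inner_parallel_set \<Omega> (d/8))"
    using inner_parallel_set_locally_linked[OF assms(5-7)] r
    by (intro path_connected_of_locally_linked[OF \<open>connected \<Omega>\<close> inner_parallel_set_subset[OF r],
        of "5/2 * (d/8)"]) auto
  then show ?thesis using Omega_eps_complement[OF assms(1,3) r] by simp
qed

end
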